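(* Let $N\ge 2$ and $m\ge N$ be integers, let $c_1,\dots,c_m$ be contents with request probabilities $\rho_1,\dots,\rho_m\ge 0$, $\sum_{\ell=1}^m\rho_\ell=1$, and set $\mathcal{P}_{\textup{hit}}=\sum_{\kappa=1}^{N}\rho_\kappa$. Consider users $u_1,\dots,u_N$, where $u_\kappa$ caches exactly the content $c_\kappa$, and where each user $u_\mu$ independently requests a single content $R_\mu$ with $\Pr(R_\mu=c_\ell)=\rho_\ell$. Let $K$ be uniform on $\{1,\dots,N\}$, independent of the requests, and consider the operating mode of the user $u_K$ (modes defined in the context). Then \begin{align*} \mathcal{P}_{\textup{SR}}&= \tfrac{1}{N} \textstyle\sum_{\kappa=1}^{N} \rho_\kappa \left(1-\rho_\kappa\right)^{N-1},\\ \mathcal{P}_{\textup{SR-HDTX}} &= \tfrac{1}{N} \textstyle\sum_{\kappa=1}^{N}\rho_\kappa \left(1-\left(1-\rho_\kappa \right)^{N-1}\right),\\ \mathcal{P}_{\textup{FDTR}} &= \tfrac{1}{N} \textstyle\sum_{\kappa=1}^{N}\left(\mathcal{P}_{\textup{hit}}-\rho_\kappa \right)\left(1-\left(1-\rho_\kappa \right)^{N-1}\right),\\ \mathcal{P}_{\textup{BFD}} &= \tfrac{1}{N} \textstyle\sum_{\kappa=1}^{N}\left(\mathcal{P}_{\textup{hit}}-\rho_\kappa \right)\rho_\kappa,\\ \mathcal{P}_{\textup{TNFD}} &= \tfrac{1}{N} \textstyle\sum_{\kappa=1}^{N}\left(\mathcal{P}_{\textup{hit}}-\rho_\kappa \right)\left(1-\rho_\kappa-\left(1-\rho_\kappa\right)^{N-1}\right),\\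 \mathcal{P}_{\textup{HDRX}} &= \tfrac{1}{N} \textstyle\sum_{\kappa=1}^{N}\left(\mathcal{P}_{\textup{hit}}-\rho_\kappa \right)\left(1-\rho_\kappa\right)^{N-1},\\ \mathcal{P}_{\textup{HDTX}} &= \tfrac{1}{N} \textstyle\sum_{\kappa=1}^{N}\left(1-\mathcal{P}_{\textup{hit}}\right)\left(1-\left(1-\rho_\kappa \right)^{N-1}\right),\\ \mathcal{P}_{\textup{HO}} &= \tfrac{1}{N} \textstyle\sum_{\kappa=1}^{N}\left(1-\mathcal{P}_{\textup{hit}}\right)\left(1-\rho_\kappa \right)^{N-1}. \end{align*}
   Context: For a user $u_\kappa$, let $S_\kappa$ be the event that there exists $\mu\ne\kappa$, $\mu\in\{1,\dots,N\}$, with $R_\mu=c_\kappa$ (some other user requests the content cached by $u_\kappa$). The operating modes of $u_\kappa$ are: SR (self-request): $R_\kappa=c_\kappa$ and not $S_\kappa$; SR-HDTX: $R_\kappa=c_\kappa$ and $S_\kappa$; FDTR (full-duplex transceiver): $R_\kappa=c_\mu$ for some $\mu\in\{1,\dots,N\}\setminus\{\kappa\}$, and $S_\kappa$; BFD (bi-directional full-duplex): $R_\kappa=c_\mu$ for some $\mu\in\{1,\dots,N\}\setminus\{\kappa\}$ and this $u_\mu$ has $R_\mu=c_\kappa$; TNFD (three-node full-duplex): FDTR holds but BFD does not; HDRX (half-duplex receiver): $R_\kappa=c_\mu$ for some $\mu\in\{1,\dots,N\}\setminus\{\kappa\}$ and not $S_\kappa$; HDTX (half-duplex transmitter): $R_\kappa\notin\{c_1,\dots,c_N\}$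 and $S_\kappa$; HO (hitting outage): $R_\kappa\notin\{c_1,\dots,c_N\}$ and not $S_\kappa$. For a mode $\Delta$, $\mathcal{P}_\Delta$ denotes the probability that $u_K$ is in mode $\Delta$. *)

theory Defs
  imports Complex_Main "HOL-Library.FuncSet"
begin

text \<open>Contents are indexed by 1..m; user u_k caches content c_k, i.e. content index k.
  A request profile is a function r from users {1..N} to content indices {1..m}
  (r mu = l means R_mu = c_l).\<close>

datatype mode = SR | SR_HDTX | FDTR | BFD | TNFD | HDRX | HDTX | HO

definition S_event :: "nat \<Rightarrow> (nat \<Rightarrow> nat) \<Rightarrow> nat \<Rightarrow> bool" where
  "S_event N r k \<longleftrightarrow> (\<exists>mu\<in>{1..N}. mu \<noteq> k \<and> r mu = k)"

definition in_mode :: "nat \<Rightarrow> (nat \<Rightarrow> nat) \<Rightarrow> nat \<Rightarrow> mode \<Rightarrow> bool" where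
  "in_mode N r k D = (case D of
      SR \<Rightarrow> r k = k \<and> \<not> S_event N r k
    | SR_HDTX \<Rightarrow> r k = k \<and> S_event N r k
    | FDTR \<Rightarrow> (\<exists>mu\<in>{1..N} - {k}. r k = mu) \<and> S_event N r k
    | BFD \<Rightarrow> (\<exists>mu\<in>{1..N} - {k}. r k = mu \<and> r mu = k)
    | TNFD \<Rightarrow> ((\<exists>mu\<in>{1..N} - {k}. r k = mu) \<and> S_event N r k)
              \<and> \<not> (\<exists>mu\<in>{1..N} - {k}. r k = mu \<and> r mu = k)
    | HDRX \<Rightarrow> (\<exists>mu\<in>{1..N} - {k}. r k = mu) \<and> \<not> S_event N r k
    | HDTX \<Rightarrow> r k \<notin> {1..N} \<and> S_event N r k
    | HO \<Rightarrow> r k \<notin> {1..N} \<and> \<not> S_event N r k)"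

definition P_mode :: "nat \<Rightarrow> nat \<Rightarrow> (nat \<Rightarrow> real) \<Rightarrow> mode \<Rightarrow> real" where
  "P_mode N m rho D =
     (\<Sum>k\<in>{1..N}. (1 / real N) *
        (\<Sum>r\<in>PiE {1..N} (\<lambda>_. {1..m}).
           (\<Prod>mu\<in>{1..N}. rho (r mu)) * (if in_mode N r k D then 1 else 0)))"

definition P_hit :: "nat \<Rightarrow> (nat \<Rightarrow> real) \<Rightarrow> real" where
  "P_hit N rho = (\<Sum>k\<in>{1..N}. rho k)"

end

theory Submission
  imports Defs
begin

text \<open>Since the requests are independent, the probability that every user \<open>u\<^sub>\<mu>\<close> requests
  a content from a prescribed set \<open>G\<^sub>\<mu>\<close> factorises into \<open>\<Prod>\<^sub>\<mu> Pr(R \<in> G\<^sub>\<mu>)\<close>. The complement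
  of \<open>S\<^sub>\<kappa>\<close> says that each of the other \<open>N - 1\<close> users avoids \<open>c\<^sub>\<kappa>\<close>, so it has probability
  \<open>(1 - \<rho>\<^sub>\<kappa>)^(N - 1)\<close> and is independent of \<open>R\<^sub>\<kappa>\<close>. Every mode except BFD and TNFD is the
  intersection of an event on \<open>R\<^sub>\<kappa>\<close> (self, other cached content, uncached content) with
  \<open>S\<^sub>\<kappa>\<close> or its complement. BFD is the disjoint union over partners \<open>\<mu>\<close> of the events
  \<open>R\<^sub>\<kappa> = c\<^sub>\<mu> \<and> R\<^sub>\<mu> = c\<^sub>\<kappa>\<close>, each of probability \<open>\<rho>\<^sub>\<mu> \<rho>\<^sub>\<kappa>\<close>, and TNFD is FDTR minus BFD
  because BFD implies FDTR.\<close>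

lemma prod_indicator:
  assumes "finite I"
  shows "(\<Prod>i\<in>I. if P i then 1 else 0 :: 'a::comm_semiring_1) = (if \<forall>i\<in>I. P i then 1 else 0)"
  using assms by (auto intro!: prod_zero)

lemma prod_if_eq_point:
  assumes "finite A" and "k \<in> A"
  shows "(\<Prod>i\<in>A. f (if i = k then b else c)) = f b * f c ^ (card A - 1)"
proof -
  have "(\<Prod>i\<in>A. f (if i = k then b else c)) = f b * (\<Prod>i\<in>A - {k}. f (if i = k then b else c))"
    using assms by (simp add: prod.remove)
  also have "(\<Prod>i\<in>A - {k}. f (if i = k then b else c)) = (\<Prod>i\<in>A - {k}. f c)"
    by (rule prod.cong) auto
  finally show ?thesis
    using assms by simp
qed

definition request_prob :: "nat \<Rightarrow> nat \<Rightarrow> (nat \<Rightarrow> real) \<Rightarrow> ((nat \<Rightarrow> nat) \<Rightarrow> bool) \<Rightarrow> real" where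
  "request_prob N m rho P = (\<Sum>r\<in>PiE {1..N} (\<lambda>_. {1..m}).
      (\<Prod>mu\<in>{1..N}. rho (r mu)) * (if P r then 1 else 0))"

definition content_prob :: "nat \<Rightarrow> (nat \<Rightarrow> real) \<Rightarrow> nat set \<Rightarrow> real" where
  "content_prob m rho B = (\<Sum>l\<in>{1..m} \<inter> B. rho l)"

lemma P_mode_eq_request_prob:
  "P_mode N m rho D = (1 / real N) * (\<Sum>k\<in>{1..N}. request_prob N m rho (\<lambda>r. in_mode N r k D))"
  unfolding P_mode_def request_prob_def by (simp add: sum_distrib_left)

lemma request_prob_cong:
  assumes "\<And>r. r \<in> PiE {1..N} (\<lambda>_. {1..m}) \<Longrightarrow> P r = P' r"
  shows "request_prob N m rho P = request_prob N m rho P'"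
  unfolding request_prob_def using assms by (intro sum.cong) auto

lemma request_prob_conj_not:
  "request_prob N m rho (\<lambda>r. P r \<and> \<not> Q r)
     = request_prob N m rho P - request_prob N m rho (\<lambda>r. P r \<and> Q r)"
  unfolding request_prob_def by (subst sum_subtractf [symmetric]) (intro sum.cong, auto)

lemma request_prob_product:
  "request_prob N m rho (\<lambda>r. \<forall>mu\<in>{1..N}. r mu \<in> G mu)
     = (\<Prod>mu\<in>{1..N}. content_prob m rho (G mu))"
proof -
  have "request_prob N m rho (\<lambda>r. \<forall>mu\<in>{1..N}. r mu \<in> G mu)
      = (\<Sum>r\<in>PiE {1..N} (\<lambda>_. {1..m}).
           \<Prod>mu\<in>{1..N}. rho (r mu) * (if r mu \<in> G mu then 1 else 0))"
    unfolding request_prob_def by (simp add: prod.distrib prod_indicator)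
  also have "\<dots> = (\<Prod>mu\<in>{1..N}. \<Sum>l\<in>{1..m}. rho l * (if l \<in> G mu then 1 else 0))"
    by (subst prod_sum_PiE) auto
  finally show ?thesis
    unfolding content_prob_def by (simp add: sum.inter_restrict if_distrib cong: if_cong)
qed

lemma request_prob_one_vs_rest:
  assumes "k \<in> {1..N}"
  shows "request_prob N m rho (\<lambda>r. r k \<in> B \<and> (\<forall>mu\<in>{1..N}. mu \<noteq> k \<longrightarrow> r mu \<in> C))
     = content_prob m rho B * content_prob m rho C ^ (N - 1)"
proof -
  have "request_prob N m rho (\<lambda>r. r k \<in> B \<and> (\<forall>mu\<in>{1..N}. mu \<noteq> k \<longrightarrow> r mu \<in> C))
      = request_prob N m rho (\<lambda>r. \<forall>mu\<in>{1..N}. r mu \<in> (if mu = k then B else C))"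
    using assms by (intro request_prob_cong) auto
  also have "\<dots> = (\<Prod>mu\<in>{1..N}. content_prob m rho (if mu = k then B else C))"
    by (rule request_prob_product)
  also have "\<dots> = content_prob m rho B * content_prob m rho C ^ (N - 1)"
    using assms by (simp add: prod_if_eq_point)
  finally show ?thesis .
qed

lemma content_prob_UNIV:
  assumes "(\<Sum>l\<in>{1..m}. rho l) = 1"
  shows "content_prob m rho UNIV = 1"
  using assms by (simp add: content_prob_def)

lemma content_prob_singleton:
  assumes "k \<in> {1..m}"
  shows "content_prob m rho {k} = rho k"
  using assms by (simp add: content_prob_def)

lemma content_prob_Compl_singleton:
  assumes "k \<in> {1..m}" and "(\<Sum>l\<in>{1..m}. rho l) = 1"
  shows "content_prob m rho (- {k}) = 1 - rho k"
proof -
  have "{1..m} \<inter> - {k} = {1..m} - {k}" by auto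
  then show ?thesis
    using assms by (simp add: content_prob_def sum_diff1)
qed

lemma content_prob_cached_by_others:
  assumes "k \<in> {1..N}" and "N \<le> m"
  shows "content_prob m rho ({1..N} - {k}) = P_hit N rho - rho k"
proof -
  have "{1..m} \<inter> ({1..N} - {k}) = {1..N} - {k}"
    using assms by auto
  then show ?thesis
    using assms by (simp add: content_prob_def P_hit_def sum_diff1)
qed

lemma content_prob_uncached:
  assumes "N \<le> m" and "(\<Sum>l\<in>{1..m}. rho l) = 1"
  shows "content_prob m rho (- {1..N}) = 1 - P_hit N rho"
proof -
  have "{1..m} \<inter> - {1..N} = {1..m} - {1..N}" and "{1..N} \<subseteq> {1..m}"
    using assms by auto
  then show ?thesis
    using assms by (simp add: content_prob_def P_hit_def sum_diff)
qed

lemma request_prob_own_request: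
  assumes "k \<in> {1..N}" and "(\<Sum>l\<in>{1..m}. rho l) = 1"
  shows "request_prob N m rho (\<lambda>r. r k \<in> B) = content_prob m rho B"
  using request_prob_one_vs_rest [OF assms(1), of m rho B UNIV]
  by (simp add: content_prob_UNIV [OF assms(2)])

lemma request_prob_own_request_not_requested:
  assumes "k \<in> {1..N}" and "k \<le> m" and "(\<Sum>l\<in>{1..m}. rho l) = 1"
  shows "request_prob N m rho (\<lambda>r. r k \<in> B \<and> \<not> S_event N r k)
     = content_prob m rho B * (1 - rho k) ^ (N - 1)"
proof -
  have "request_prob N m rho (\<lambda>r. r k \<in> B \<and> \<not> S_event N r k)
      = request_prob N m rho (\<lambda>r. r k \<in> B \<and> (\<forall>mu\<in>{1..N}. mu \<noteq> k \<longrightarrow> r mu \<in> - {k}))"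
    unfolding S_event_def by (intro request_prob_cong) auto
  also have "\<dots> = content_prob m rho B * (1 - rho k) ^ (N - 1)"
    using request_prob_one_vs_rest [OF assms(1), of m rho B "- {k}"]
      content_prob_Compl_singleton [of k m rho] assms by simp
  finally show ?thesis .
qed

lemma request_prob_own_request_requested:
  assumes "k \<in> {1..N}" and "k \<le> m" and "(\<Sum>l\<in>{1..m}. rho l) = 1"
  shows "request_prob N m rho (\<lambda>r. r k \<in> B \<and> S_event N r k)
     = content_prob m rho B * (1 - (1 - rho k) ^ (N - 1))"
  using request_prob_conj_not [of N m rho "\<lambda>r. r k \<in> B" "\<lambda>r. S_event N r k"]
    request_prob_own_request [OF assms(1,3)] request_prob_own_request_not_requested [OF assms]
  by (simp add: algebra_simps)

lemma request_prob_mutual: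
  assumes "k \<in> {1..N}" and "j \<in> {1..N}" and "j \<noteq> k" and "N \<le> m"
    and "(\<Sum>l\<in>{1..m}. rho l) = 1"
  shows "request_prob N m rho (\<lambda>r. r k = j \<and> r j = k) = rho j * rho k"
proof -
  define G where "G mu = (if mu = k then {j} else if mu = j then {k} else UNIV)" for mu
  have "request_prob N m rho (\<lambda>r. r k = j \<and> r j = k)
      = request_prob N m rho (\<lambda>r. \<forall>mu\<in>{1..N}. r mu \<in> G mu)"
    using assms by (intro request_prob_cong) (auto simp: G_def)
  also have "\<dots> = (\<Prod>mu\<in>{1..N}. content_prob m rho (G mu))"
    by (rule request_prob_product)
  also have "\<dots> = (\<Prod>mu\<in>{k, j}. content_prob m rho (G mu))"
    using assms by (intro prod.mono_neutral_right) (auto simp: G_def content_prob_UNIV)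
  also have "\<dots> = rho j * rho k"
    using assms by (simp add: G_def content_prob_singleton)
  finally show ?thesis .
qed

lemma indicator_mutual_request_eq_sum:
  assumes "finite A"
  shows "(if \<exists>j\<in>A. r k = j \<and> r j = k then 1 else 0 :: real)
     = (\<Sum>j\<in>A. if r k = j \<and> r j = k then 1 else 0)"
proof -
  have "(\<Sum>j\<in>A. if r k = j \<and> r j = k then 1 else 0 :: real)
      = (\<Sum>j\<in>A. if r k = j then (if r (r k) = k then 1 else 0) else 0)"
    by (intro sum.cong) auto
  also have "\<dots> = (if r k \<in> A then (if r (r k) = k then 1 else 0) else 0)"
    using assms by (simp add: sum.delta')
  finally show ?thesis by auto
qed

lemma request_prob_BFD:
  assumes "k \<in> {1..N}" and "N \<le> m" and "(\<Sum>l\<in>{1..m}. rho l) = 1"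
  shows "request_prob N m rho (\<lambda>r. in_mode N r k BFD) = (P_hit N rho - rho k) * rho k"
proof -
  have "request_prob N m rho (\<lambda>r. in_mode N r k BFD)
      = (\<Sum>r\<in>PiE {1..N} (\<lambda>_. {1..m}). \<Sum>j\<in>{1..N} - {k}.
           (\<Prod>mu\<in>{1..N}. rho (r mu)) * (if r k = j \<and> r j = k then 1 else 0))"
    unfolding request_prob_def in_mode_def mode.case
    by (simp only: indicator_mutual_request_eq_sum [OF finite_Diff [OF finite_atLeastAtMost]]
        sum_distrib_left)
  also have "\<dots> = (\<Sum>j\<in>{1..N} - {k}. request_prob N m rho (\<lambda>r. r k = j \<and> r j = k))"
    unfolding request_prob_def by (rule sum.swap)
  also have "\<dots> = (\<Sum>j\<in>{1..N} - {k}. rho j * rho k)"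
    using assms by (intro sum.cong) (auto simp: request_prob_mutual)
  also have "\<dots> = (P_hit N rho - rho k) * rho k"
    using assms by (simp add: sum_distrib_right [symmetric] sum_diff1 P_hit_def)
  finally show ?thesis .
qed

lemma request_prob_TNFD:
  "request_prob N m rho (\<lambda>r. in_mode N r k TNFD)
     = request_prob N m rho (\<lambda>r. in_mode N r k FDTR) - request_prob N m rho (\<lambda>r. in_mode N r k BFD)"
proof -
  have "request_prob N m rho (\<lambda>r. in_mode N r k TNFD)
      = request_prob N m rho (\<lambda>r. in_mode N r k FDTR)
        - request_prob N m rho (\<lambda>r. in_mode N r k FDTR \<and> in_mode N r k BFD)"
    unfolding in_mode_def mode.case by (rule request_prob_conj_not)
  also have "request_prob N m rho (\<lambda>r. in_mode N r k FDTR \<and> in_mode N r k BFD)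
      = request_prob N m rho (\<lambda>r. in_mode N r k BFD)"
    by (rule request_prob_cong) (auto simp: in_mode_def S_event_def intro!: bexI [where x = "r k" for r])
  finally show ?thesis .
qed

lemma request_prob_in_mode:
  assumes k: "k \<in> {1..N}" and "N \<le> m" and "(\<Sum>l\<in>{1..m}. rho l) = 1"
  shows
   "request_prob N m rho (\<lambda>r. in_mode N r k SR) = rho k * (1 - rho k) ^ (N - 1)"
   "request_prob N m rho (\<lambda>r. in_mode N r k SR_HDTX) = rho k * (1 - (1 - rho k) ^ (N - 1))"
   "request_prob N m rho (\<lambda>r. in_mode N r k FDTR)
      = (P_hit N rho - rho k) * (1 - (1 - rho k) ^ (N - 1))"
   "request_prob N m rho (\<lambda>r. in_mode N r k BFD) = (P_hit N rho - rho k) * rho k"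
   "request_prob N m rho (\<lambda>r. in_mode N r k TNFD)
      = (P_hit N rho - rho k) * (1 - rho k - (1 - rho k) ^ (N - 1))"
   "request_prob N m rho (\<lambda>r. in_mode N r k HDRX) = (P_hit N rho - rho k) * (1 - rho k) ^ (N - 1)"
   "request_prob N m rho (\<lambda>r. in_mode N r k HDTX)
      = (1 - P_hit N rho) * (1 - (1 - rho k) ^ (N - 1))"
   "request_prob N m rho (\<lambda>r. in_mode N r k HO) = (1 - P_hit N rho) * (1 - rho k) ^ (N - 1)"
proof -
  have km: "k \<in> {1..m}" "k \<le> m"
    using assms by auto
  have own: "r k = k \<longleftrightarrow> r k \<in> {k}" for r :: "nat \<Rightarrow> nat"
    by simp
  have other: "(\<exists>mu\<in>{1..N} - {k}. r k = mu) \<longleftrightarrow> r k \<in> {1..N} - {k}" for r :: "nat \<Rightarrow> nat"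
    by auto
  have uncached: "r k \<notin> {1..N} \<longleftrightarrow> r k \<in> - {1..N}" for r :: "nat \<Rightarrow> nat"
    by simp
  note requested = request_prob_own_request_requested [OF k km(2) assms(3)]
  note not_requested = request_prob_own_request_not_requested [OF k km(2) assms(3)]
  note probs = content_prob_singleton [OF km(1)] content_prob_cached_by_others [OF k assms(2)]
    content_prob_uncached [OF assms(2,3)]
  show "request_prob N m rho (\<lambda>r. in_mode N r k SR) = rho k * (1 - rho k) ^ (N - 1)"
    using not_requested [of "{k}"] by (simp only: in_mode_def mode.case own probs)
  show "request_prob N m rho (\<lambda>r. in_mode N r k SR_HDTX) = rho k * (1 - (1 - rho k) ^ (N - 1))"
    using requested [of "{k}"] by (simp only: in_mode_def mode.case own probs)
  show FDTR: "request_prob N m rho (\<lambda>r. in_mode N r k FDTR)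
      = (P_hit N rho - rho k) * (1 - (1 - rho k) ^ (N - 1))"
    using requested [of "{1..N} - {k}"] by (simp only: in_mode_def mode.case other probs)
  show BFD: "request_prob N m rho (\<lambda>r. in_mode N r k BFD) = (P_hit N rho - rho k) * rho k"
    using assms by (rule request_prob_BFD)
  show "request_prob N m rho (\<lambda>r. in_mode N r k TNFD)
      = (P_hit N rho - rho k) * (1 - rho k - (1 - rho k) ^ (N - 1))"
    by (simp add: request_prob_TNFD FDTR BFD algebra_simps)
  show "request_prob N m rho (\<lambda>r. in_mode N r k HDRX) = (P_hit N rho - rho k) * (1 - rho k) ^ (N - 1)"
    using not_requested [of "{1..N} - {k}"] by (simp only: in_mode_def mode.case other probs)
  show "request_prob N m rho (\<lambda>r. in_mode N r k HDTX)
      = (1 - P_hit N rho) * (1 - (1 - rho k) ^ (N - 1))"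
    using requested [of "- {1..N}"] by (simp only: in_mode_def mode.case uncached probs)
  show "request_prob N m rho (\<lambda>r. in_mode N r k HO) = (1 - P_hit N rho) * (1 - rho k) ^ (N - 1)"
    using not_requested [of "- {1..N}"] by (simp only: in_mode_def mode.case uncached probs)
qed

theorem theorem1:
  fixes N m :: nat and rho :: "nat \<Rightarrow> real"
  assumes "N \<ge> 2" and "m \<ge> N"
    and "\<forall>l\<in>{1..m}. rho l \<ge> 0" and "(\<Sum>l\<in>{1..m}. rho l) = 1"
  shows "(P_mode N m rho SR = (1 / real N) * (\<Sum>k\<in>{1..N}. rho k * (1 - rho k) ^ (N - 1)) \<and>
    P_mode N m rho SR_HDTX = (1 / real N) * (\<Sum>k\<in>{1..N}. rho k * (1 - (1 - rho k) ^ (N - 1))) \<and>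
    P_mode N m rho FDTR = (1 / real N) *
           (\<Sum>k\<in>{1..N}. (P_hit N rho - rho k) * (1 - (1 - rho k) ^ (N - 1))) \<and>
    P_mode N m rho BFD = (1 / real N) * (\<Sum>k\<in>{1..N}. (P_hit N rho - rho k) * rho k) \<and>
    P_mode N m rho TNFD = (1 / real N) *
           (\<Sum>k\<in>{1..N}. (P_hit N rho - rho k) * (1 - rho k - (1 - rho k) ^ (N - 1))) \<and>
    P_mode N m rho HDRX = (1 / real N) *
           (\<Sum>k\<in>{1..N}. (P_hit N rho - rho k) * (1 - rho k) ^ (N - 1)) \<and>
    P_mode N m rho HDTX = (1 / real N) *
           (\<Sum>k\<in>{1..N}. (1 - P_hit N rho) * (1 - (1 - rho k) ^ (N - 1))) \<and>
    P_mode N m rho HO = (1 / real N) *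
           (\<Sum>k\<in>{1..N}. (1 - P_hit N rho) * (1 - rho k) ^ (N - 1)))"
  using request_prob_in_mode [OF _ assms(2) assms(4)]
  by (simp add: P_mode_eq_request_prob)

end
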